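(* For any $\delta\in(0,1)$, $n\in\mathbb{N}$ and $\lambda\in\left[14\log\frac{4}{\delta},n\right]$, the bit-sum protocol $P_{n,\lambda}$ is $(\varepsilon,\delta)$-differentially private in the shuffled model, where \[ \varepsilon=\sqrt{\frac{32\log\frac{4}{\delta}}{\lambda-\sqrt{2\lambda\log\frac{2}{\delta}}}}\cdot\left(1-\frac{\lambda-\sqrt{2\lambda\log\frac{2}{\delta}}}{n}\right). \]
   Context: An algorithm $M$ on datasets in $\{0,1\}^n$ is $(\varepsilon,\delta)$-differentially private if for all $X,X'$ differing in one user's entry and every set $T$ of outputs, $\Pr[M(X)\in T]\le e^{\varepsilon}\Pr[M(X')\in T]+\delta$. The bit-sum protocol $P_{n,\lambda}$: each of $n$ users with $x_i\in\{0,1\}$ independently draws $b\sim\mathrm{Ber}(\lambda/n)$ and sends the single message $y_i=x_i$ if $b=0$ and a fresh $\mathrm{Ber}(1/2)$ bit if $b=1$; a shuffler outputs the messages in uniformly random order; the analyzer outputs $\frac{n}{n-\lambda}(\sum_i y_i-\lambda/2)$. The protocol is $(\varepsilon,\delta)$-differentially private in the shuffled model if the map from $(x_1,\dots,x_n)$ to the shuffled sequence of messages is $(\varepsilon,\delta)$-differentially private. $\log$ is the natural logarithm. *)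

theory Defs
  imports "HOL-Probability.Probability" "HOL-Combinatorics.Permutations"
begin

text \<open>Datasets are bool lists of length n (user i holds entry i).\<close>

definition neighbouring :: "bool list \<Rightarrow> bool list \<Rightarrow> bool" where
  "neighbouring X X' \<longleftrightarrow> length X = length X' \<and>
     (\<exists>i < length X. \<forall>j. j \<noteq> i \<longrightarrow> X ! j = X' ! j)"

definition diff_private :: "nat \<Rightarrow> (bool list \<Rightarrow> 'b pmf) \<Rightarrow> real \<Rightarrow> real \<Rightarrow> bool" where
  "diff_private n M \<epsilon> \<delta> \<longleftrightarrow>
     (\<forall>X X' T. length X = n \<longrightarrow> length X' = n \<longrightarrow> neighbouring X X' \<longrightarrow>
        measure_pmf.prob (M X) T \<le> exp \<epsilon> * measure_pmf.prob (M X') T + \<delta>)"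

definition randomizer :: "nat \<Rightarrow> real \<Rightarrow> bool \<Rightarrow> bool pmf" where
  "randomizer n lam x = do {
     b \<leftarrow> bernoulli_pmf (lam / real n);
     if b then bernoulli_pmf (1/2) else return_pmf x }"

fun local_msgs :: "nat \<Rightarrow> real \<Rightarrow> bool list \<Rightarrow> bool list pmf" where
  "local_msgs n lam [] = return_pmf []"
| "local_msgs n lam (x # xs) = do {
     y \<leftarrow> randomizer n lam x;
     ys \<leftarrow> local_msgs n lam xs;
     return_pmf (y # ys) }"

definition shuffle :: "'a list \<Rightarrow> 'a list pmf" where
  "shuffle ys = map_pmf (\<lambda>\<sigma>. map (\<lambda>i. ys ! \<sigma> i) [0..<length ys])
                   (pmf_of_set {\<sigma>. \<sigma> permutes {..<length ys}})"

definition shuffled_bitsum :: "nat \<Rightarrow> real \<Rightarrow> bool list \<Rightarrow> bool list pmf" where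
  "shuffled_bitsum n lam X = local_msgs n lam X \<bind> shuffle"

end

theory Submission
  imports Defs
begin

text \<open>
  Fix the user on which two neighbouring datasets differ. The shuffled output reveals only the
  number of ones among the messages. Every other user independently sends a fresh fair coin with
  probability p = lam/n (it joins the privacy blanket) and its true bit otherwise, so given the
  other users the number of ones is c + Bin(b, 1/2) plus the message of the distinguished user,
  where b is the size of the blanket.

  By a Chernoff bound, b >= a = lam - sqrt(2 lam log(2/delta)) except with probability 7 delta/8.
  For such b the ratio (k + 1)/(b - k) of consecutive probabilities of Bin(b, 1/2) is at most
  exp e0, e0 = sqrt(32 log(4/delta)/a), outside a Hoeffding tail of mass delta/8; hence
  Bin(b, 1/2) and 1 + Bin(b, 1/2) are (e0, delta/8)-indistinguishable. The distinguished user
  sends a one with probability 1 - p/2 or p/2 according to its bit, and mixing the two shifts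
  with these weights reduces the privacy loss to (1 - p) e0, which is at most e0 (1 - a/n).
\<close>

lemma expectation_bind_pmf:
  fixes f :: "'b \<Rightarrow> real"
  assumes "\<And>y. \<bar>f y\<bar> \<le> B"
  shows "measure_pmf.expectation (M \<bind> N) f =
           measure_pmf.expectation M (\<lambda>x. measure_pmf.expectation (N x) f)"
  unfolding measure_pmf_bind
  by (rule integral_bind[where K="count_space UNIV" and B=B and B'=1])
     (use assms in \<open>auto simp: measure_pmf_in_subprob_algebra\<close>)

lemma prob_bind_pmf:
  "measure_pmf.prob (M \<bind> N) T = measure_pmf.expectation M (\<lambda>x. measure_pmf.prob (N x) T)"
  using expectation_bind_pmf[of "indicator T" 1 M N] by (simp split: split_indicator)

lemma expectation_pmf_unit_interval:
  fixes f :: "'a \<Rightarrow> real"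
  assumes "\<And>x. 0 \<le> f x" "\<And>x. f x \<le> 1"
  shows "0 \<le> measure_pmf.expectation M f" "measure_pmf.expectation M f \<le> 1"
  using assms
  by (auto intro!: integral_nonneg_AE measure_pmf.integral_le_const
                   measure_pmf.integrable_const_bound[where B=1])

section \<open>The shuffled view depends only on the number of ones\<close>

definition num_ones :: "bool list \<Rightarrow> nat" where
  "num_ones ys = length (filter id ys)"

definition sorted_msgs :: "nat \<Rightarrow> nat \<Rightarrow> bool list" where
  "sorted_msgs n k = replicate k True @ replicate (n - k) False"

definition ones_pmf :: "nat \<Rightarrow> real \<Rightarrow> bool list \<Rightarrow> nat pmf" where
  "ones_pmf n lam X = map_pmf num_ones (local_msgs n lam X)"

lemma length_local_msgs: "ys \<in> set_pmf (local_msgs n lam X) \<Longrightarrow> length ys = length X"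
  by (induction X arbitrary: ys) auto

lemma shuffle_permute_list:
  assumes p: "p permutes {..<length ys}"
  shows "shuffle (permute_list p ys) = shuffle ys"
proof -
  let ?S = "{\<sigma>. \<sigma> permutes {..<length ys}}"
  have S: "?S \<noteq> {}" "finite ?S"
    by (auto intro: finite_permutations permutes_id)
  have "shuffle (permute_list p ys) =
          map_pmf (\<lambda>\<sigma>. map (\<lambda>i. ys ! \<sigma> i) [0..<length ys])
            (map_pmf ((\<circ>) p) (pmf_of_set ?S))"
    unfolding shuffle_def map_pmf_comp
    by (intro map_pmf_cong) (auto simp: set_pmf_of_set[OF S] permute_list_nth[OF p]
                    permutes_in_image[where S="{..<length ys}", simplified])
  also have "map_pmf ((\<circ>) p) (pmf_of_set ?S) = pmf_of_set ?S"
  proof (intro map_pmf_of_set_bij_betw S bij_betw_imageI)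
    show "inj_on ((\<circ>) p) ?S"
      using permutes_inj[OF p] by (auto intro!: inj_onI simp: fun_eq_iff inj_eq)
    show "(\<circ>) p ` ?S = ?S"
      using image_compose_permutations_left[OF p] by blast
  qed
  finally show ?thesis
    by (simp add: shuffle_def)
qed

lemma shuffle_eq_shuffle_sorted_msgs:
  "shuffle ys = shuffle (sorted_msgs (length ys) (num_ones ys))"
proof -
  have "count (mset ys) True = num_ones ys" "count (mset ys) False = length ys - num_ones ys"
    by (induction ys) (auto simp: num_ones_def Suc_diff_le)
  then have "mset (sorted_msgs (length ys) (num_ones ys)) = mset ys"
    by (intro multiset_eqI) (auto simp: sorted_msgs_def split: bool.split)
  then obtain p where "p permutes {..<length ys}" "permute_list p ys = sorted_msgs (length ys) (num_ones ys)"
    by (metis mset_eq_permutation)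
  then show ?thesis
    by (metis shuffle_permute_list)
qed

lemma shuffled_bitsum_eq_bind_ones_pmf:
  assumes "length X = n"
  shows "shuffled_bitsum n lam X = ones_pmf n lam X \<bind> (\<lambda>k. shuffle (sorted_msgs n k))"
  unfolding shuffled_bitsum_def ones_pmf_def bind_map_pmf
  using assms by (intro bind_pmf_cong refl) (metis length_local_msgs shuffle_eq_shuffle_sorted_msgs)

section \<open>The privacy blanket\<close>

lemma num_ones_Cons [simp]: "num_ones (y # ys) = num_ones ys + of_bool y"
  by (simp add: num_ones_def)

lemma ones_pmf_Nil: "ones_pmf n lam [] = return_pmf 0"
  by (simp add: ones_pmf_def num_ones_def)

lemma ones_pmf_Cons:
  "ones_pmf n lam (x # xs) =
     randomizer n lam x \<bind> (\<lambda>y. map_pmf (\<lambda>k. k + of_bool y) (ones_pmf n lam xs))"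
  by (simp add: ones_pmf_def map_pmf_def bind_assoc_pmf bind_return_pmf)

lemma ones_pmf_append_Cons:
  "ones_pmf n lam (xs1 @ x # xs2) =
     randomizer n lam x \<bind> (\<lambda>y. map_pmf (\<lambda>k. k + of_bool y) (ones_pmf n lam (xs1 @ xs2)))"
proof (induction xs1)
  case Nil
  then show ?case by (simp add: ones_pmf_Cons)
next
  case (Cons z xs1)
  have "ones_pmf n lam ((z # xs1) @ x # xs2) =
          randomizer n lam z \<bind> (\<lambda>y'. map_pmf (\<lambda>k. k + of_bool y')
            (randomizer n lam x \<bind> (\<lambda>y. map_pmf (\<lambda>k. k + of_bool y) (ones_pmf n lam (xs1 @ xs2)))))"
    using Cons by (simp add: ones_pmf_Cons)
  also have "\<dots> =
          randomizer n lam x \<bind> (\<lambda>y. map_pmf (\<lambda>k. k + of_bool y)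
            (randomizer n lam z \<bind> (\<lambda>y'. map_pmf (\<lambda>k. k + of_bool y') (ones_pmf n lam (xs1 @ xs2)))))"
    unfolding map_pmf_def bind_assoc_pmf bind_return_pmf
    by (subst bind_commute_pmf) (simp add: ac_simps)
  finally show ?case
    by (simp add: ones_pmf_Cons)
qed

abbreviation fair_binomial :: "nat \<Rightarrow> nat pmf" where
  "fair_binomial b \<equiv> binomial_pmf b (1 / 2)"

text \<open>A pair \<open>(c, b)\<close> drawn from \<open>blanket_pmf p xs\<close> records the number \<open>c\<close> of ones
  among the users that report truthfully and the number \<open>b\<close> of users that send a fresh
  fair coin.\<close>

fun blanket_pmf :: "real \<Rightarrow> bool list \<Rightarrow> (nat \<times> nat) pmf" where
  "blanket_pmf p [] = return_pmf (0, 0)"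
| "blanket_pmf p (x # xs) = bernoulli_pmf p \<bind> (\<lambda>r. map_pmf
     (\<lambda>(c, b). if r then (c, Suc b) else (c + of_bool x, b)) (blanket_pmf p xs))"

lemma fair_binomial_Suc:
  "fair_binomial (Suc b) =
     fair_binomial b \<bind> (\<lambda>k. map_pmf (\<lambda>y. k + of_bool y) (bernoulli_pmf (1 / 2)))"
  by (subst binomial_pmf_Suc)
     (simp_all add: map_pmf_def bind_return_pmf bind_commute_pmf[of "bernoulli_pmf _"]
                    add.commute of_bool_def)

lemma ones_pmf_eq_blanket_pmf:
  assumes "0 \<le> lam / real n" "lam / real n \<le> 1"
  shows "ones_pmf n lam xs =
           blanket_pmf (lam / real n) xs \<bind> (\<lambda>(c, b). map_pmf ((+) c) (fair_binomial b))"
proof (induction xs)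
  case Nil
  then show ?case by (simp add: ones_pmf_Nil bind_return_pmf binomial_pmf_0)
next
  case (Cons x xs)
  show ?case
    unfolding ones_pmf_Cons Cons blanket_pmf.simps randomizer_def
    unfolding map_pmf_def bind_assoc_pmf bind_return_pmf
    by (intro bind_pmf_cong refl)
       (simp_all add: bind_assoc_pmf bind_return_pmf split_beta fair_binomial_Suc map_pmf_def
                      bind_commute_pmf[of "bernoulli_pmf (1 / 2)"] ac_simps)
qed

lemma randomizer_eq_bernoulli:
  assumes "0 \<le> lam / real n" "lam / real n \<le> 1"
  shows "randomizer n lam x = bernoulli_pmf (if x then 1 - lam / real n / 2 else lam / real n / 2)"
proof (intro pmf_eqI)
  fix y :: bool
  show "pmf (randomizer n lam x) y =
          pmf (bernoulli_pmf (if x then 1 - lam / real n / 2 else lam / real n / 2)) y"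
    using assms by (cases x; cases y) (auto simp: randomizer_def pmf_bind)
qed

lemma prob_shuffled_bitsum_split:
  fixes T :: "bool list set"
  assumes len: "length (xs1 @ x # xs2) = n" and p: "0 \<le> lam / real n" "lam / real n \<le> 1"
  defines "G \<equiv> \<lambda>k. measure_pmf.prob (shuffle (sorted_msgs n k)) T"
    and "W \<equiv> blanket_pmf (lam / real n) (xs1 @ xs2)"
    and "r \<equiv> if x then 1 - lam / real n / 2 else lam / real n / 2"
  shows "measure_pmf.prob (shuffled_bitsum n lam (xs1 @ x # xs2)) T =
     r * measure_pmf.expectation W
           (\<lambda>(c, b). measure_pmf.expectation (fair_binomial b) (\<lambda>u. G (c + Suc u)))
     + (1 - r) * measure_pmf.expectation W
           (\<lambda>(c, b). measure_pmf.expectation (fair_binomial b) (\<lambda>u. G (c + u)))"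
proof -
  have G: "\<bar>G k\<bar> \<le> 1" for k
    by (simp add: G_def)
  have "measure_pmf.prob (shuffled_bitsum n lam (xs1 @ x # xs2)) T =
          measure_pmf.expectation (ones_pmf n lam (xs1 @ x # xs2)) G"
    unfolding shuffled_bitsum_eq_bind_ones_pmf[OF len] prob_bind_pmf G_def ..
  also have "\<dots> = measure_pmf.expectation (bernoulli_pmf r) (\<lambda>y. measure_pmf.expectation W
           (\<lambda>(c, b). measure_pmf.expectation (fair_binomial b) (\<lambda>u. G (c + u + of_bool y))))"
    unfolding ones_pmf_append_Cons randomizer_eq_bernoulli[OF p] ones_pmf_eq_blanket_pmf[OF p]
    by (simp add: expectation_bind_pmf[OF G] r_def W_def split_beta split_beta' add.assoc)
  also have "\<dots> = r * measure_pmf.expectation W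
           (\<lambda>(c, b). measure_pmf.expectation (fair_binomial b) (\<lambda>u. G (c + Suc u)))
     + (1 - r) * measure_pmf.expectation W
           (\<lambda>(c, b). measure_pmf.expectation (fair_binomial b) (\<lambda>u. G (c + u)))"
    using p by (simp add: r_def)
  finally show ?thesis .
qed

section \<open>Shifting a fair binomial by one\<close>

lemma expectation_fair_binomial:
  fixes f :: "nat \<Rightarrow> real"
  shows "measure_pmf.expectation (fair_binomial b) f = (\<Sum>k\<le>b. f k * pmf (fair_binomial b) k)"
  by (rule integral_measure_pmf_real) (auto simp: set_pmf_binomial_eq)

lemma pmf_fair_binomial: "k \<le> b \<Longrightarrow> pmf (fair_binomial b) k = real (b choose k) / 2 ^ b"
  by (simp add: power_add[symmetric] power_one_over)

lemma expectation_fair_binomial_reflect: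
  fixes f :: "nat \<Rightarrow> real"
  shows "measure_pmf.expectation (fair_binomial b) (\<lambda>k. f (b - k)) =
           measure_pmf.expectation (fair_binomial b) f"
proof -
  have "(\<Sum>k\<le>b. f (b - k) * pmf (fair_binomial b) k) =
          (\<Sum>k\<le>b. f k * pmf (fair_binomial b) (b - k))"
    by (rule sum.reindex_bij_witness[where i="\<lambda>k. b - k" and j="\<lambda>k. b - k"]) auto
  also have "\<dots> = (\<Sum>k\<le>b. f k * pmf (fair_binomial b) k)"
    by (intro sum.cong refl) (simp add: pmf_fair_binomial binomial_symmetric[symmetric])
  finally show ?thesis
    by (simp add: expectation_fair_binomial)
qed

lemma pmf_fair_binomial_ratio:
  assumes "k < b"
  shows "pmf (fair_binomial b) k * real (b - k) = pmf (fair_binomial b) (Suc k) * real (Suc k)"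
proof -
  have "real (b - k) * real (b choose k) = real (Suc k) * real (b choose Suc k)"
    by (metis binomial_absorb_comp binomial_absorption of_nat_mult)
  then show ?thesis
    unfolding pmf_fair_binomial[OF less_imp_le[OF assms]] pmf_fair_binomial[OF Suc_leI[OF assms]]
    by (simp add: field_simps del: of_nat_Suc)
qed

lemma pmf_fair_binomial_le_next:
  assumes "0 \<le> t" and concentrated: "real b / 2 + t + 1 \<le> exp e * (real b / 2 - t)"
  shows "pmf (fair_binomial b) k \<le> exp e * pmf (fair_binomial b) (Suc k)
           + (if real b / 2 + t \<le> real k then pmf (fair_binomial b) k else 0)"
proof (cases "real b / 2 + t \<le> real k")
  case False
  have "0 < exp e * (real b / 2 - t)"
    using concentrated \<open>0 \<le> t\<close> by linarith
  then have "t < real b / 2"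
    by (simp add: zero_less_mult_iff)
  then have "k < b"
    using False by linarith
  have "real (Suc k) \<le> exp e * (real b / 2 - t)"
    using False concentrated by simp
  also have "\<dots> \<le> exp e * real (b - k)"
    using False \<open>k < b\<close> by (intro mult_left_mono) (auto simp: of_nat_diff)
  finally have "pmf (fair_binomial b) k * real (Suc k) \<le> pmf (fair_binomial b) k * (exp e * real (b - k))"
    by (rule mult_left_mono) simp
  also have "\<dots> = exp e * pmf (fair_binomial b) (Suc k) * real (Suc k)"
    using pmf_fair_binomial_ratio[OF \<open>k < b\<close>] by (simp only: ac_simps)
  finally show ?thesis
    using False by (simp del: of_nat_Suc)
qed simp

lemma fair_binomial_upper_tail:
  assumes "0 \<le> t"
  shows "(\<Sum>k\<le>b. if real b / 2 + t \<le> real k then pmf (fair_binomial b) k else 0)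
           \<le> exp (- 2 * t\<^sup>2 / real b)"
proof -
  have "(\<Sum>k\<le>b. if real b / 2 + t \<le> real k then pmf (fair_binomial b) k else 0) =
          measure_pmf.expectation (fair_binomial b) (indicator {k. real b * (1 / 2) + t \<le> real k})"
    unfolding expectation_fair_binomial by (intro sum.cong) (auto simp: indicator_def)
  also have "\<dots> = measure_pmf.prob (fair_binomial b) {k. real b * (1 / 2) + t \<le> real k}"
    by simp
  also have "\<dots> \<le> exp (- 2 * t\<^sup>2 / real b)"
  proof (cases "b = 0")
    case False
    then show ?thesis
      by (intro binomial_distribution.prob_ge)
         (use assms in \<open>auto simp: binomial_distribution_def\<close>)
  qed simp
  finally show ?thesis .
qed

lemma fair_binomial_shift_le:
  fixes h :: "nat \<Rightarrow> real"
  assumes h: "\<And>k. 0 \<le> h k" "\<And>k. h k \<le> 1" and t: "0 \<le> t"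
    and concentrated: "real b / 2 + t + 1 \<le> exp e * (real b / 2 - t)"
  shows "measure_pmf.expectation (fair_binomial b) (\<lambda>k. h (Suc k)) \<le>
           exp e * measure_pmf.expectation (fair_binomial b) h + exp (- 2 * t\<^sup>2 / real b)"
proof -
  define \<beta> where "\<beta> = pmf (fair_binomial b)"
  define tail where "tail k = (if real b / 2 + t \<le> real k then \<beta> k else 0)" for k
  have pointwise: "h (Suc k) * \<beta> k \<le> exp e * (h (Suc k) * \<beta> (Suc k)) + tail k" for k
  proof -
    have "h (Suc k) * \<beta> k \<le> h (Suc k) * (exp e * \<beta> (Suc k) + tail k)"
      using pmf_fair_binomial_le_next[OF t concentrated, of k, folded \<beta>_def, folded tail_def]
      by (rule mult_left_mono) (use h in auto)
    also have "\<dots> \<le> exp e * (h (Suc k) * \<beta> (Suc k)) + tail k"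
      using h[of "Suc k"] by (simp add: algebra_simps tail_def \<beta>_def mult_left_le_one_le)
    finally show ?thesis .
  qed
  have shift: "(\<Sum>k\<le>b. h (Suc k) * \<beta> (Suc k)) \<le> (\<Sum>k\<le>b. h k * \<beta> k)"
  proof -
    have "(\<Sum>k\<le>b. h k * \<beta> k) = (\<Sum>k\<le>Suc b. h k * \<beta> k)"
      by (simp add: \<beta>_def)
    also have "\<dots> = h 0 * \<beta> 0 + (\<Sum>k\<le>b. h (Suc k) * \<beta> (Suc k))"
      by (rule sum.atMost_Suc_shift)
    finally show ?thesis
      using h[of 0] by (simp add: \<beta>_def)
  qed
  have "measure_pmf.expectation (fair_binomial b) (\<lambda>k. h (Suc k)) =
          (\<Sum>k\<le>b. h (Suc k) * \<beta> k)"
    by (simp add: expectation_fair_binomial \<beta>_def)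
  also have "\<dots> \<le> (\<Sum>k\<le>b. exp e * (h (Suc k) * \<beta> (Suc k)) + tail k)"
    by (intro sum_mono pointwise)
  also have "\<dots> = exp e * (\<Sum>k\<le>b. h (Suc k) * \<beta> (Suc k)) + (\<Sum>k\<le>b. tail k)"
    by (simp add: sum.distrib sum_distrib_left)
  also have "\<dots> \<le> exp e * (\<Sum>k\<le>b. h k * \<beta> k) + exp (- 2 * t\<^sup>2 / real b)"
    using shift fair_binomial_upper_tail[OF t, of b, folded \<beta>_def, folded tail_def]
    by (intro add_mono mult_left_mono) auto
  also have "(\<Sum>k\<le>b. h k * \<beta> k) = measure_pmf.expectation (fair_binomial b) h"
    by (simp add: expectation_fair_binomial \<beta>_def)
  finally show ?thesis .
qed

text \<open>The tests \<open>h\<close> are \<open>[0, 1]\<close>-valued rather than indicators of events because they will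
  be output probabilities of the shuffler, averaged over the rest of the protocol.\<close>

definition shift_indistinguishable :: "nat \<Rightarrow> real \<Rightarrow> real \<Rightarrow> bool" where
  "shift_indistinguishable b e \<eta> \<longleftrightarrow>
     (\<forall>h :: nat \<Rightarrow> real. (\<forall>k. 0 \<le> h k \<and> h k \<le> 1) \<longrightarrow>
        measure_pmf.expectation (fair_binomial b) (\<lambda>k. h (Suc k))
          \<le> exp e * measure_pmf.expectation (fair_binomial b) h + \<eta> \<and>
        measure_pmf.expectation (fair_binomial b) h
          \<le> exp e * measure_pmf.expectation (fair_binomial b) (\<lambda>k. h (Suc k)) + \<eta>)"

lemma shift_indistinguishable_if_concentrated:
  assumes "0 \<le> t" "real b / 2 + t + 1 \<le> exp e * (real b / 2 - t)"
  shows "shift_indistinguishable b e (exp (- 2 * t\<^sup>2 / real b))"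
  unfolding shift_indistinguishable_def
proof (intro allI impI conjI)
  fix h :: "nat \<Rightarrow> real"
  assume h: "\<forall>k. 0 \<le> h k \<and> h k \<le> 1"
  then show "measure_pmf.expectation (fair_binomial b) (\<lambda>k. h (Suc k))
               \<le> exp e * measure_pmf.expectation (fair_binomial b) h + exp (- 2 * t\<^sup>2 / real b)"
    using assms by (intro fair_binomial_shift_le) auto
  \<comment> \<open>The reverse inequality follows from the symmetry \<open>k \<mapsto> b - k\<close> of \<open>Bin(b, 1/2)\<close>.\<close>
  define g where "g k = h (Suc b - k)" for k
  have "measure_pmf.expectation (fair_binomial b) h =
          measure_pmf.expectation (fair_binomial b) (\<lambda>k. g (Suc k))"
    using expectation_fair_binomial_reflect[of b h] by (simp add: g_def)
  also have "\<dots> \<le> exp e * measure_pmf.expectation (fair_binomial b) g + exp (- 2 * t\<^sup>2 / real b)"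
    using h assms by (intro fair_binomial_shift_le) (auto simp: g_def)
  also have "measure_pmf.expectation (fair_binomial b) g =
               measure_pmf.expectation (fair_binomial b) (\<lambda>k. h (Suc (b - k)))"
    by (intro integral_cong_AE) (auto simp: AE_measure_pmf_iff g_def Suc_diff_le)
  also have "\<dots> = measure_pmf.expectation (fair_binomial b) (\<lambda>k. h (Suc k))"
    by (rule expectation_fair_binomial_reflect)
  finally show "measure_pmf.expectation (fair_binomial b) h
                  \<le> exp e * measure_pmf.expectation (fair_binomial b) (\<lambda>k. h (Suc k))
                    + exp (- 2 * t\<^sup>2 / real b)" .
qed

lemma quadratic_le_exp_mult_one_minus:
  fixes y e :: real
  assumes y: "0 \<le> y" "y \<le> 5 / 8" and e: "13 / 4 * y \<le> e"
  shows "1 + y + y\<^sup>2 / 2 \<le> exp e * (1 - y)"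
proof -
  have "1 + 13 / 4 * y + (13 / 4 * y)\<^sup>2 / 2 \<le> 1 + e + e\<^sup>2 / 2"
    using y e by (intro add_mono divide_right_mono power_mono) auto
  also have "\<dots> \<le> exp e"
    using y e by (intro exp_lower_Taylor_quadratic) simp
  finally have exp_e: "1 + 13 / 4 * y + 169 / 32 * y\<^sup>2 \<le> exp e"
    by (simp add: power2_eq_square)
  have "(1 + 13 / 4 * y + 169 / 32 * y\<^sup>2) * (1 - y) - (1 + y + y\<^sup>2 / 2) =
          y * ((5 / 8 - y) * (169 * y + 453 / 8) + 295 / 64) / 32"
    by (simp add: power2_eq_square field_simps)
  moreover have "0 \<le> y * ((5 / 8 - y) * (169 * y + 453 / 8) + 295 / 64) / 32"
    using y by simp
  ultimately have "1 + y + y\<^sup>2 / 2 \<le> (1 + 13 / 4 * y + 169 / 32 * y\<^sup>2) * (1 - y)"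
    by linarith
  also have "\<dots> \<le> exp e * (1 - y)"
    using exp_e y by (intro mult_right_mono) auto
  finally show ?thesis .
qed

lemma shift_indistinguishable_of_log:
  fixes e L :: real
  assumes L: "2 \<le> L" "16 * L \<le> 3 * real b" and e: "0 \<le> e" "169 * L \<le> 8 * real b * e\<^sup>2"
  shows "shift_indistinguishable b e (exp (- L))"
proof -
  have b: "0 < real b"
    using L by linarith
  define y where "y = sqrt (2 * L / real b)"
  define t where "t = y * real b / 2"
  \<comment> \<open>chosen so that the Hoeffding tail \<open>exp (- 2 * t\<^sup>2 / b)\<close> is exactly \<open>exp (- L)\<close>\<close>
  have y: "0 \<le> y" "y\<^sup>2 = 2 * L / real b"
    using L b by (auto simp: y_def)
  have "y\<^sup>2 \<le> 3 / 8"
    using L b by (simp add: y divide_le_eq)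
  also have "\<dots> \<le> (5 / 8)\<^sup>2"
    by (simp add: power2_eq_square)
  finally have "y \<le> 5 / 8"
    by (rule power2_le_imp_le) simp
  have "(13 / 4 * y)\<^sup>2 = 169 * L / (8 * real b)"
    unfolding power_mult_distrib y(2) by (simp add: power2_eq_square)
  also have "\<dots> \<le> e\<^sup>2"
    using e b by (simp add: divide_le_eq mult.commute)
  finally have "13 / 4 * y \<le> e"
    using e(1) by (rule power2_le_imp_le)
  have "real b / 2 + t + 1 \<le> real b / 2 * (1 + y + y\<^sup>2 / 2)"
    using L b by (simp add: t_def y field_simps)
  also have "\<dots> \<le> real b / 2 * (exp e * (1 - y))"
    using quadratic_le_exp_mult_one_minus[OF y(1) \<open>y \<le> 5 / 8\<close> \<open>13 / 4 * y \<le> e\<close>] b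
    by simp
  also have "\<dots> = exp e * (real b / 2 - t)"
    by (simp add: t_def algebra_simps)
  finally have "shift_indistinguishable b e (exp (- 2 * t\<^sup>2 / real b))"
    using y b by (intro shift_indistinguishable_if_concentrated) (auto simp: t_def)
  moreover have "2 * t\<^sup>2 / real b = y\<^sup>2 * real b / 2"
    using b by (simp add: t_def power2_eq_square field_simps)
  then have "2 * t\<^sup>2 / real b = L"
    using b by (simp add: y(2))
  ultimately show ?thesis
    by simp
qed

section \<open>Amplification by the randomizer\<close>

lemma exp_mixture_le:
  fixes q x :: real
  assumes q: "0 \<le> q" "q \<le> 1 / 2" and x: "0 \<le> x"
  shows "(1 - q) * exp x + q \<le> exp ((1 - 2 * q) * x) * (q * exp x + (1 - q))"
proof -
  define \<psi> where "\<psi> y = (1 - 2 * q) * y + ln (q * exp y + (1 - q)) - ln ((1 - q) * exp y + q)" for y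
  have pos: "0 < q * exp y + (1 - q)" "0 < (1 - q) * exp y + q" for y
    using q by (auto intro: add_nonneg_pos add_pos_nonneg)
  have "\<psi> 0 \<le> \<psi> x"
  proof (rule DERIV_nonneg_imp_nondecreasing[OF x])
    fix y :: real
    define u where "u = exp y"
    define D where "D = (q * u + (1 - q)) * ((1 - q) * u + q)"
    have "u > 0" "D > 0"
      using pos[of y] by (simp_all add: u_def D_def)
    have "D - u = q * (1 - q) * (u - 1)\<^sup>2"
      by (simp add: D_def power2_eq_square algebra_simps)
    moreover have "0 \<le> q * (1 - q) * (u - 1)\<^sup>2"
      using q by simp
    ultimately have "u \<le> D"
      by linarith
    then have "(1 - 2 * q) * u \<le> (1 - 2 * q) * D"
      using q by (intro mult_left_mono) auto
    then have "(1 - 2 * q) * u / D \<le> 1 - 2 * q"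
      using \<open>D > 0\<close> by (simp add: divide_le_eq)
    moreover have "q * u / (q * u + (1 - q)) - (1 - q) * u / ((1 - q) * u + q) = - (1 - 2 * q) * u / D"
      using pos[of y] by (simp add: D_def u_def field_simps)
    then have "q * u / (q * u + (1 - q)) - (1 - q) * u / ((1 - q) * u + q) = - ((1 - 2 * q) * u / D)"
      by (simp only: mult_minus_left minus_divide_left)
    moreover have "(\<psi> has_real_derivative
        (1 - 2 * q) + q * u / (q * u + (1 - q)) - (1 - q) * u / ((1 - q) * u + q)) (at y)"
      unfolding \<psi>_def u_def using pos[of y]
      by (auto intro!: derivative_eq_intros simp: ac_simps)
    ultimately show "\<exists>d. (\<psi> has_real_derivative d) (at y) \<and> 0 \<le> d"
      by force
  qed
  then have "ln ((1 - q) * exp x + q) \<le> (1 - 2 * q) * x + ln (q * exp x + (1 - q))"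
    by (simp add: \<psi>_def)
  then show ?thesis
    using pos[of x] by (simp add: exp_add flip: exp_le_cancel_iff[of "ln _"])
qed

lemma convex_mixture_le:
  fixes q A B E K \<eta> :: real
  assumes q: "0 \<le> q" "q \<le> 1 / 2" and AB: "0 \<le> A" "0 \<le> B" and E: "1 \<le> E" and "0 \<le> \<eta>"
    and key: "(1 - q) * K + q \<le> E * (q * K + (1 - q))"
    and A: "A \<le> K * B + \<eta>"
  shows "(1 - q) * A + q * B \<le> E * (q * A + (1 - q) * B) + \<eta>"
proof (cases "1 - q - E * q \<le> 0")
  case True
  have "1 - q \<le> E * (1 - q)"
    using mult_right_mono[OF E, of "1 - q"] q by simp
  then have "q - E * (1 - q) \<le> 0"
    using q by linarith
  then have "(q - E * (1 - q)) * B \<le> 0" "(1 - q - E * q) * A \<le> 0"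
    using True AB by (simp_all add: mult_nonpos_nonneg)
  then show ?thesis
    using \<open>0 \<le> \<eta>\<close> by (simp add: algebra_simps)
next
  case False
  moreover have "0 \<le> E * q"
    using q E by simp
  ultimately have c: "0 \<le> 1 - q - E * q" "1 - q - E * q \<le> 1"
    using q by linarith+
  have "(1 - q - E * q) * A \<le> (1 - q - E * q) * (K * B + \<eta>)"
    using A c(1) by (rule mult_left_mono)
  moreover have "((1 - q) * K + q - E * (q * K + (1 - q))) * B \<le> 0"
    using key AB by (simp add: mult_nonpos_nonneg)
  moreover have "(1 - q - E * q) * \<eta> \<le> \<eta>"
    using c \<open>0 \<le> \<eta>\<close> by (simp add: mult_left_le_one_le)
  ultimately show ?thesis
    by (simp add: algebra_simps)
qed

lemma randomized_bit_le:
  fixes q A B e \<epsilon> \<eta> :: real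
  assumes q: "0 \<le> q" "q \<le> 1 / 2" and AB: "0 \<le> A" "0 \<le> B"
    and e: "0 \<le> e" "(1 - 2 * q) * e \<le> \<epsilon>" and "0 \<le> \<eta>"
    and A: "A \<le> exp e * B + \<eta>" and B: "B \<le> exp e * A + \<eta>"
  defines "r \<equiv> \<lambda>x. if x then 1 - q else q"
    \<comment> \<open>the probability that a user holding \<open>x\<close> sends a one, for \<open>q = lam / (2 n)\<close>\<close>
  shows "r x * A + (1 - r x) * B \<le> exp \<epsilon> * (r x' * A + (1 - r x') * B) + \<eta>"
proof -
  have "0 \<le> (1 - 2 * q) * e"
    using q e by simp
  then have "1 \<le> exp \<epsilon>"
    using e by simp
  have "(1 - q) * exp e + q \<le> exp ((1 - 2 * q) * e) * (q * exp e + (1 - q))"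
    using q e(1) by (rule exp_mixture_le)
  also have "\<dots> \<le> exp \<epsilon> * (q * exp e + (1 - q))"
    using q e(2) by (intro mult_right_mono) auto
  finally have key: "(1 - q) * exp e + q \<le> exp \<epsilon> * (q * exp e + (1 - q))" .
  consider "x = x'" | "x" "\<not> x'" | "\<not> x" "x'"
    by blast
  then show ?thesis
  proof cases
    case 1
    have "0 \<le> r x * A + (1 - r x) * B"
      using q AB by (simp add: r_def)
    then show ?thesis
      using 1 \<open>1 \<le> exp \<epsilon>\<close> \<open>0 \<le> \<eta>\<close>
      by (smt (verit) mult_le_cancel_right1)
  next
    case 2
    then show ?thesis
      using convex_mixture_le[OF q AB \<open>1 \<le> exp \<epsilon>\<close> \<open>0 \<le> \<eta>\<close> key A]
      by (simp add: r_def)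
  next
    case 3
    then show ?thesis
      using convex_mixture_le[OF q AB(2,1) \<open>1 \<le> exp \<epsilon>\<close> \<open>0 \<le> \<eta>\<close> key B]
      by (simp add: r_def ac_simps)
  qed
qed

lemma expectation_randomized_bit_le:
  fixes W :: "'a pmf" and A B :: "'a \<Rightarrow> real" and q e \<epsilon> \<eta> :: real
  assumes q: "0 \<le> q" "q \<le> 1 / 2"
    and A: "\<And>w. 0 \<le> A w" "\<And>w. A w \<le> 1" and B: "\<And>w. 0 \<le> B w" "\<And>w. B w \<le> 1"
    and e: "0 \<le> e" "(1 - 2 * q) * e \<le> \<epsilon>" and \<eta>: "0 \<le> \<eta>"
    and shifted: "\<And>w. w \<notin> S \<Longrightarrow> A w \<le> exp e * B w + \<eta> \<and> B w \<le> exp e * A w + \<eta>"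
  defines "r \<equiv> \<lambda>x. if x then 1 - q else q"
  shows "r x * measure_pmf.expectation W A + (1 - r x) * measure_pmf.expectation W B
           \<le> exp \<epsilon> * (r x' * measure_pmf.expectation W A
                        + (1 - r x') * measure_pmf.expectation W B)
             + (measure_pmf.prob W S + \<eta>)"
proof -
  have integrable: "integrable W A" "integrable W B" "integrable W (indicator S :: 'a \<Rightarrow> real)"
    using A B by (auto intro!: measure_pmf.integrable_const_bound[where B=1] split: split_indicator)
  have pointwise: "r x * A w + (1 - r x) * B w
                     \<le> exp \<epsilon> * (r x' * A w + (1 - r x') * B w) + (indicator S w + \<eta>)" for w
  proof (cases "w \<in> S")
    case True
    have "r x * A w + (1 - r x) * B w \<le> 1"
      using A B q by (auto simp: r_def intro: convex_bound_le)
    moreover have "0 \<le> exp \<epsilon> * (r x' * A w + (1 - r x') * B w)"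
      using A B q by (simp add: r_def)
    ultimately show ?thesis
      using True \<eta> by simp
  next
    case False
    then show ?thesis
      using randomized_bit_le[OF q A(1) B(1) e \<eta>, of w] shifted[OF False] by (simp add: r_def)
  qed
  have "r x * measure_pmf.expectation W A + (1 - r x) * measure_pmf.expectation W B =
          measure_pmf.expectation W (\<lambda>w. r x * A w + (1 - r x) * B w)"
    using integrable by simp
  also have "\<dots> \<le> measure_pmf.expectation W
                   (\<lambda>w. exp \<epsilon> * (r x' * A w + (1 - r x') * B w) + (indicator S w + \<eta>))"
    using integrable by (intro integral_mono pointwise) auto
  also have "\<dots> = exp \<epsilon> * (r x' * measure_pmf.expectation W A
                             + (1 - r x') * measure_pmf.expectation W B)
                   + (measure_pmf.prob W S + \<eta>)"
    using integrable by simp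
  finally show ?thesis .
qed

lemma shuffled_bitsum_change_one_le:
  fixes T :: "bool list set" and a e \<epsilon> \<eta> \<theta> :: real
  assumes len: "length (xs1 @ x # xs2) = n" and lam: "0 \<le> lam" "lam \<le> real n"
    and e: "0 \<le> e" "(1 - lam / real n) * e \<le> \<epsilon>" and \<eta>: "0 \<le> \<eta>"
    and shift: "\<And>b. a \<le> real b \<Longrightarrow> shift_indistinguishable b e \<eta>"
    and tail: "measure_pmf.prob (blanket_pmf (lam / real n) (xs1 @ xs2)) {w. real (snd w) < a} \<le> \<theta>"
  shows "measure_pmf.prob (shuffled_bitsum n lam (xs1 @ x # xs2)) T
           \<le> exp \<epsilon> * measure_pmf.prob (shuffled_bitsum n lam (xs1 @ x' # xs2)) T + (\<theta> + \<eta>)"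
proof -
  have p: "0 \<le> lam / real n" "lam / real n \<le> 1"
    using lam by (auto simp: divide_le_eq_1)
  define W where "W = blanket_pmf (lam / real n) (xs1 @ xs2)"
  define G where "G k = measure_pmf.prob (shuffle (sorted_msgs n k)) T" for k
  define A where "A = (\<lambda>(c, b). measure_pmf.expectation (fair_binomial b) (\<lambda>u. G (c + Suc u)))"
  define B where "B = (\<lambda>(c, b). measure_pmf.expectation (fair_binomial b) (\<lambda>u. G (c + u)))"
  have G: "0 \<le> G k" "G k \<le> 1" for k
    by (simp_all add: G_def)
  have A: "0 \<le> A w" "A w \<le> 1" and B: "0 \<le> B w" "B w \<le> 1" for w
    by (auto simp: A_def B_def split: prod.split intro!: expectation_pmf_unit_interval G)
  have shifted: "A w \<le> exp e * B w + \<eta> \<and> B w \<le> exp e * A w + \<eta>"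
    if "w \<notin> {w. real (snd w) < a}" for w
  proof -
    obtain c b where w: "w = (c, b)"
      by fastforce
    have "shift_indistinguishable b e \<eta>"
      using that by (intro shift) (simp add: w)
    then show ?thesis
      unfolding shift_indistinguishable_def using G
      by (auto simp: A_def B_def w elim!: allE[of _ "\<lambda>k. G (c + k)"])
  qed
  let ?r = "\<lambda>y. if y then 1 - lam / real n / 2 else lam / real n / 2"
  have prob_eq: "measure_pmf.prob (shuffled_bitsum n lam (xs1 @ y # xs2)) T =
                   ?r y * measure_pmf.expectation W A + (1 - ?r y) * measure_pmf.expectation W B" for y
    using prob_shuffled_bitsum_split[of xs1 y xs2 n lam T] len p
    by (simp add: W_def G_def A_def B_def)
  have q: "0 \<le> lam / real n / 2" "lam / real n / 2 \<le> 1 / 2"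
    and eps: "(1 - 2 * (lam / real n / 2)) * e \<le> \<epsilon>"
    using p e by simp_all
  have "?r x * measure_pmf.expectation W A + (1 - ?r x) * measure_pmf.expectation W B
          \<le> exp \<epsilon> * (?r x' * measure_pmf.expectation W A
                       + (1 - ?r x') * measure_pmf.expectation W B)
            + (measure_pmf.prob W {w. real (snd w) < a} + \<eta>)"
    by (rule expectation_randomized_bit_le[OF q A B e(1) eps \<eta> shifted])
  then show ?thesis
    unfolding prob_eq using tail[folded W_def] by linarith
qed

lemma neighbouring_split:
  assumes "neighbouring X X'"
  obtains xs1 x x' xs2 where "X = xs1 @ x # xs2" "X' = xs1 @ x' # xs2"
proof -
  obtain i where i: "length X = length X'" "i < length X"
    and eq: "\<And>j. j \<noteq> i \<Longrightarrow> X ! j = X' ! j"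
    using assms unfolding neighbouring_def by blast
  have "take i X' = take i X" "drop (Suc i) X' = drop (Suc i) X"
    using i eq by (auto intro!: nth_equalityI)
  then have "X' = take i X @ X' ! i # drop (Suc i) X"
    using i id_take_nth_drop[of i X'] by simp
  moreover have "X = take i X @ X ! i # drop (Suc i) X"
    using i by (simp add: id_take_nth_drop)
  ultimately show ?thesis
    using that by blast
qed

lemma shuffled_bitsum_neighbouring_le:
  fixes T :: "bool list set" and a e \<epsilon> \<eta> \<theta> :: real
  assumes "length X = n" "neighbouring X X'" and lam: "0 \<le> lam" "lam \<le> real n"
    and e: "0 \<le> e" "(1 - lam / real n) * e \<le> \<epsilon>" and \<eta>: "0 \<le> \<eta>"
    and shift: "\<And>b. a \<le> real b \<Longrightarrow> shift_indistinguishable b e \<eta>"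
    and tail: "\<And>xs. length xs = n - 1 \<Longrightarrow>
                 measure_pmf.prob (blanket_pmf (lam / real n) xs) {w. real (snd w) < a} \<le> \<theta>"
  shows "measure_pmf.prob (shuffled_bitsum n lam X) T
           \<le> exp \<epsilon> * measure_pmf.prob (shuffled_bitsum n lam X') T + (\<theta> + \<eta>)"
proof -
  obtain xs1 x x' xs2 where X: "X = xs1 @ x # xs2" "X' = xs1 @ x' # xs2"
    using neighbouring_split[OF assms(2)] .
  show ?thesis
    unfolding X
    by (rule shuffled_bitsum_change_one_le[OF _ lam e \<eta> shift tail]) (use assms(1) X in auto)
qed

section \<open>Size of the blanket\<close>

lemma expectation_blanket_pmf_exp:
  assumes p: "0 \<le> p" "p \<le> 1" and s: "0 \<le> s"
  shows "measure_pmf.expectation (blanket_pmf p xs) (\<lambda>w. exp (- s * real (snd w)))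
           = (1 - p + p * exp (- s)) ^ length xs"
proof (induction xs)
  case Nil
  then show ?case by simp
next
  case (Cons x xs)
  have bounded: "\<bar>exp (- s * real (snd w))\<bar> \<le> 1" for w :: "nat \<times> nat"
    using s by simp
  have "measure_pmf.expectation (blanket_pmf p (x # xs)) (\<lambda>w. exp (- s * real (snd w))) =
          measure_pmf.expectation (bernoulli_pmf p) (\<lambda>r. measure_pmf.expectation
            (map_pmf (\<lambda>(c, b). if r then (c, Suc b) else (c + of_bool x, b)) (blanket_pmf p xs))
            (\<lambda>w. exp (- s * real (snd w))))"
    unfolding blanket_pmf.simps by (rule expectation_bind_pmf[OF bounded])
  also have "\<dots> = p * measure_pmf.expectation (blanket_pmf p xs)
                         (\<lambda>w. exp (- s) * exp (- s * real (snd w)))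
          + (1 - p) * measure_pmf.expectation (blanket_pmf p xs) (\<lambda>w. exp (- s * real (snd w)))"
    using p by (simp add: split_beta algebra_simps flip: exp_add)
  also have "\<dots> = (1 - p + p * exp (- s)) ^ length (x # xs)"
    using Cons by (simp add: algebra_simps)
  finally show ?case .
qed

lemma blanket_pmf_lower_tail_mgf:
  assumes p: "0 \<le> p" "p \<le> 1" and s: "0 \<le> s"
  shows "measure_pmf.prob (blanket_pmf p xs) {w. real (snd w) < a}
           \<le> exp (s * a) * (1 - p + p * exp (- s)) ^ length xs"
proof -
  have "measure_pmf.prob (blanket_pmf p xs) {w. real (snd w) < a} =
          measure_pmf.expectation (blanket_pmf p xs) (indicator {w. real (snd w) < a})"
    by simp
  also have "\<dots> \<le> measure_pmf.expectation (blanket_pmf p xs)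
                   (\<lambda>w. exp (s * a) * exp (- s * real (snd w)))"
  proof (rule integral_mono)
    fix w :: "nat \<times> nat"
    have "real (snd w) < a \<Longrightarrow> 0 \<le> s * a + - s * real (snd w)"
      using s by (simp add: mult_left_mono flip: right_diff_distrib')
    then show "indicator {w. real (snd w) < a} w \<le> exp (s * a) * exp (- s * real (snd w))"
      by (auto simp: indicator_def simp flip: exp_add)
  qed (use s in \<open>auto intro!: measure_pmf.integrable_const_bound[where B="exp (s * a)"]
                         measure_pmf.integrable_const_bound[where B=1] split: split_indicator\<close>)
  also have "\<dots> = exp (s * a) * (1 - p + p * exp (- s)) ^ length xs"
    using expectation_blanket_pmf_exp[OF p s] by simp
  finally show ?thesis .
qed

lemma exp_neg_le_quadratic:
  fixes x :: real
  assumes "0 \<le> x"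
  shows "exp (- x) \<le> 1 - x + x\<^sup>2 / 2"
proof -
  define \<phi> where "\<phi> y = 1 - y + y\<^sup>2 / 2 - exp (- y)" for y :: real
  have "\<phi> 0 \<le> \<phi> x"
  proof (rule DERIV_nonneg_imp_nondecreasing[OF assms])
    fix y :: real
    have "(\<phi> has_real_derivative (- 1 + y + exp (- y))) (at y)"
      unfolding \<phi>_def by (auto intro!: derivative_eq_intros simp: power2_eq_square)
    moreover have "0 \<le> - 1 + y + exp (- y)"
      using exp_minus_ge[of y] by linarith
    ultimately show "\<exists>d. (\<phi> has_real_derivative d) (at y) \<and> 0 \<le> d"
      by blast
  qed
  then show ?thesis
    by (simp add: \<phi>_def)
qed

lemma exp_le_inverse_one_minus:
  fixes s :: real
  assumes "s < 1"
  shows "exp s \<le> 1 / (1 - s)"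
  using exp_minus_ge[of s] assms by (simp add: exp_minus field_simps)

lemma power_bernoulli_mgf_le:
  fixes p s :: real
  assumes "0 \<le> p" "p \<le> 1"
  shows "(1 - p + p * exp (- s)) ^ m \<le> exp (real m * p * (exp (- s) - 1))"
proof -
  have "1 - p + p * exp (- s) \<le> exp (p * (exp (- s) - 1))"
    using exp_ge_add_one_self[of "p * (exp (- s) - 1)"] by (simp add: algebra_simps)
  then have "(1 - p + p * exp (- s)) ^ m \<le> exp (p * (exp (- s) - 1)) ^ m"
    using assms by (intro power_mono) (simp_all add: add_nonneg_nonneg)
  then show ?thesis
    by (simp add: mult.assoc flip: exp_of_nat_mult)
qed

lemma chernoff_exponent_le:
  fixes lam L p s r :: real
  assumes "0 \<le> lam" "0 \<le> s" "0 \<le> p" "p \<le> 1" and "lam * s\<^sup>2 = 2 * L" "s * r = 2 * L"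
  shows "s * (lam - r) + (lam - p) * (exp (- s) - 1) \<le> s - L"
proof -
  have "lam * (exp (- s) - 1) \<le> lam * (- s + s\<^sup>2 / 2)"
    using exp_neg_le_quadratic[of s] assms by (intro mult_left_mono) auto
  moreover have "p * (1 - exp (- s)) \<le> 1 - exp (- s)"
    using assms by (simp add: mult_left_le_one_le)
  moreover have "1 - exp (- s) \<le> s"
    using exp_minus_ge[of s] by linarith
  ultimately show ?thesis
    using assms by (simp add: algebra_simps)
qed

lemma blanket_pmf_lower_tail:
  fixes L lam :: real
  assumes L: "0 < L" "14 * L \<le> lam" and n: "lam \<le> real n" and len: "length xs = n - 1"
  shows "measure_pmf.prob (blanket_pmf (lam / real n) xs) {w. real (snd w) < lam - sqrt (2 * lam * L)}
           \<le> 7 / 4 * exp (- L)"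
proof -
  define p where "p = lam / real n"
  define s where "s = sqrt (2 * L / lam)"
  have lam: "0 < lam"
    using L by linarith
  then have p: "0 \<le> p" "p \<le> 1" "real (n - 1) * p = lam - p"
    using n by (auto simp: p_def of_nat_diff field_simps)
  have s: "0 \<le> s" "lam * s\<^sup>2 = 2 * L"
    using lam L by (auto simp: s_def)
  have square: "2 * L / lam * (2 * lam * L) = (2 * L)\<^sup>2"
    using lam by (simp add: power2_eq_square field_simps)
  have sqrt_eq: "s * sqrt (2 * lam * L) = 2 * L"
    unfolding s_def real_sqrt_mult[symmetric] square real_sqrt_abs using L by simp
  have "lam * (7 * s\<^sup>2) = 14 * L"
    using s(2) by (simp add: algebra_simps)
  then have "lam * (7 * s\<^sup>2) \<le> lam * 1"
    using L by linarith
  then have "s\<^sup>2 \<le> 1 / 7"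
    using lam by (simp only: mult_le_cancel_left_pos)
  also have "\<dots> \<le> (3 / 7)\<^sup>2"
    by (simp add: power2_eq_square)
  finally have "s \<le> 3 / 7"
    by (rule power2_le_imp_le) simp
  then have "exp s \<le> 1 / (1 - s)"
    by (intro exp_le_inverse_one_minus) simp
  also have "\<dots> \<le> 7 / 4"
    using \<open>s \<le> 3 / 7\<close> by (simp add: divide_le_eq)
  finally have "exp s \<le> 7 / 4" .
  have "(1 - p + p * exp (- s)) ^ (n - 1) \<le> exp (real (n - 1) * p * (exp (- s) - 1))"
    using p(1,2) by (rule power_bernoulli_mgf_le)
  also have "real (n - 1) * p = lam - p"
    by (rule p(3))
  finally have "exp (s * (lam - sqrt (2 * lam * L))) * (1 - p + p * exp (- s)) ^ (n - 1)
                  \<le> exp (s * (lam - sqrt (2 * lam * L)) + (lam - p) * (exp (- s) - 1))"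
    by (simp add: exp_add)
  also have "\<dots> \<le> exp (s - L)"
    using chernoff_exponent_le[OF _ s(1) p(1,2) s(2) sqrt_eq] lam by simp
  also have "\<dots> \<le> 7 / 4 * exp (- L)"
    using \<open>exp s \<le> 7 / 4\<close> by (simp add: exp_diff exp_minus field_simps)
  finally show ?thesis
    using blanket_pmf_lower_tail_mgf[OF p(1,2) s(1), of xs "lam - sqrt (2 * lam * L)"] len
    by (simp add: p_def)
qed

section \<open>The parameters of the protocol\<close>

lemma two_le_ln_eight: "2 \<le> ln (8 :: real)"
proof -
  have "exp (2 :: real) = exp 1 * exp 1"
    by (simp flip: exp_add)
  also have "\<dots> \<le> 272 / 100 * (272 / 100)"
    using e_less_272 by (intro mult_mono) auto
  also have "\<dots> \<le> 8"
    by simp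
  finally show ?thesis
    by (simp add: ln_ge_iff)
qed

lemma ln_over_delta_bounds:
  fixes \<delta> :: real
  assumes "0 < \<delta>" "\<delta> < 1"
  shows "0 < ln (2 / \<delta>)" "ln (2 / \<delta>) \<le> ln (4 / \<delta>)"
    and "2 \<le> ln (8 / \<delta>)" "ln (8 / \<delta>) \<le> 3 / 2 * ln (4 / \<delta>)"
proof -
  have ln_div: "ln (c / \<delta>) = ln c - ln \<delta>" if "0 < c" for c :: real
    using assms that by (simp add: ln_div)
  have "ln 4 = 2 * ln (2 :: real)" "ln 8 = 3 * ln (2 :: real)"
    using ln_realpow[of 2 2] ln_realpow[of 2 3] by simp_all
  moreover have "ln \<delta> < 0" "0 < ln (2 :: real)"
    using assms by simp_all
  ultimately show "0 < ln (2 / \<delta>)" "ln (2 / \<delta>) \<le> ln (4 / \<delta>)"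
    and "2 \<le> ln (8 / \<delta>)" "ln (8 / \<delta>) \<le> 3 / 2 * ln (4 / \<delta>)"
    using two_le_ln_eight by (simp_all add: ln_div)
qed

lemma blanket_threshold_bounds:
  fixes \<delta> lam :: real
  assumes "0 < \<delta>" "\<delta> < 1" and lam: "14 * ln (4 / \<delta>) \<le> lam"
  shows "8 * ln (4 / \<delta>) \<le> lam - sqrt (2 * lam * ln (2 / \<delta>))"
    and "lam - sqrt (2 * lam * ln (2 / \<delta>)) \<le> lam"
proof -
  note ln = ln_over_delta_bounds[OF assms(1,2)]
  have "0 < lam"
    using ln lam by linarith
  have "2 * lam * ln (2 / \<delta>) \<le> 2 * lam * (lam / 14)"
    using ln lam \<open>0 < lam\<close> by (intro mult_left_mono) auto
  also have "\<dots> \<le> (3 / 7 * lam)\<^sup>2"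
    using \<open>0 < lam\<close> by (simp add: power2_eq_square)
  finally have "sqrt (2 * lam * ln (2 / \<delta>)) \<le> sqrt ((3 / 7 * lam)\<^sup>2)"
    by (rule real_sqrt_le_mono)
  then have "sqrt (2 * lam * ln (2 / \<delta>)) \<le> 3 / 7 * lam"
    using \<open>0 < lam\<close> by simp
  then show "8 * ln (4 / \<delta>) \<le> lam - sqrt (2 * lam * ln (2 / \<delta>))"
    using lam by linarith
  show "lam - sqrt (2 * lam * ln (2 / \<delta>)) \<le> lam"
    using ln \<open>0 < lam\<close> by simp
qed

lemma shift_indistinguishable_above_threshold:
  fixes \<delta> lam :: real
  assumes \<delta>: "0 < \<delta>" "\<delta> < 1" and lam: "14 * ln (4 / \<delta>) \<le> lam"
    and b: "lam - sqrt (2 * lam * ln (2 / \<delta>)) \<le> real b"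
  shows "shift_indistinguishable b
           (sqrt (32 * ln (4 / \<delta>) / (lam - sqrt (2 * lam * ln (2 / \<delta>))))) (\<delta> / 8)"
proof -
  define a where "a = lam - sqrt (2 * lam * ln (2 / \<delta>))"
  define e where "e = sqrt (32 * ln (4 / \<delta>) / a)"
  note ln = ln_over_delta_bounds[OF \<delta>]
  have a: "8 * ln (4 / \<delta>) \<le> a" "a \<le> real b" "0 < a"
    using blanket_threshold_bounds[OF \<delta> lam] b ln by (auto simp: a_def)
  have e: "0 \<le> e" "e\<^sup>2 = 32 * ln (4 / \<delta>) / a"
    using a ln by (auto simp: e_def)
  have "169 * ln (8 / \<delta>) \<le> 256 * ln (4 / \<delta>)"
    using ln by linarith
  also have "\<dots> \<le> 8 * real b * e\<^sup>2"
    using a ln by (simp add: e(2) field_simps mult_right_mono)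
  finally have "shift_indistinguishable b e (exp (- ln (8 / \<delta>)))"
    using ln a e(1) by (intro shift_indistinguishable_of_log) auto
  moreover have "exp (- ln (8 / \<delta>)) = \<delta> / 8"
    using \<delta> by (simp add: exp_minus)
  ultimately show ?thesis
    by (simp add: e_def a_def)
qed

lemma blanket_pmf_below_threshold:
  fixes \<delta> lam :: real
  assumes \<delta>: "0 < \<delta>" "\<delta> < 1" and lam: "14 * ln (4 / \<delta>) \<le> lam" "lam \<le> real n"
    and len: "length xs = n - 1"
  shows "measure_pmf.prob (blanket_pmf (lam / real n) xs)
           {w. real (snd w) < lam - sqrt (2 * lam * ln (2 / \<delta>))} \<le> 7 / 8 * \<delta>"
proof -
  note ln = ln_over_delta_bounds[OF \<delta>]
  have "measure_pmf.prob (blanket_pmf (lam / real n) xs)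
          {w. real (snd w) < lam - sqrt (2 * lam * ln (2 / \<delta>))} \<le> 7 / 4 * exp (- ln (2 / \<delta>))"
    using ln lam len by (intro blanket_pmf_lower_tail) auto
  also have "\<dots> = 7 / 8 * \<delta>"
    using \<delta> by (simp add: exp_minus)
  finally show ?thesis .
qed

theorem corollary4p7:
  fixes \<delta> lam :: real and n :: nat
  assumes "0 < \<delta>" and "\<delta> < 1"
    and "14 * ln (4 / \<delta>) \<le> lam" and "lam \<le> real n"
  shows "diff_private n (shuffled_bitsum n lam)
           (sqrt (32 * ln (4 / \<delta>) / (lam - sqrt (2 * lam * ln (2 / \<delta>))))
              * (1 - (lam - sqrt (2 * lam * ln (2 / \<delta>))) / real n))
           \<delta>"
proof -
  define a where "a = lam - sqrt (2 * lam * ln (2 / \<delta>))"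
  define e where "e = sqrt (32 * ln (4 / \<delta>) / a)"
  have a: "8 * ln (4 / \<delta>) \<le> a" "a \<le> lam"
    using blanket_threshold_bounds[OF assms(1-3)] by (simp_all add: a_def)
  moreover have "0 < ln (4 / \<delta>)"
    using ln_over_delta_bounds[OF assms(1,2)] by linarith
  ultimately have "0 \<le> lam" "0 \<le> e"
    by (simp_all add: e_def)
  have eps: "(1 - lam / real n) * e \<le> e * (1 - a / real n)"
    using a \<open>0 \<le> e\<close> by (simp add: mult.commute mult_left_mono divide_right_mono)
  have "measure_pmf.prob (shuffled_bitsum n lam X) T
          \<le> exp (e * (1 - a / real n)) * measure_pmf.prob (shuffled_bitsum n lam X') T
            + (7 / 8 * \<delta> + \<delta> / 8)"
    if "length X = n" "neighbouring X X'" for X X' T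
    using that \<open>0 \<le> lam\<close> assms(4) \<open>0 \<le> e\<close> eps
  proof (rule shuffled_bitsum_neighbouring_le)
    show "shift_indistinguishable b e (\<delta> / 8)" if "a \<le> real b" for b
      using shift_indistinguishable_above_threshold[OF assms(1-3)] that by (simp add: e_def a_def)
    show "measure_pmf.prob (blanket_pmf (lam / real n) xs) {w. real (snd w) < a} \<le> 7 / 8 * \<delta>"
      if "length xs = n - 1" for xs
      using blanket_pmf_below_threshold[OF assms that] by (simp add: a_def)
  qed (use assms in simp)
  then show ?thesis
    unfolding diff_private_def a_def[symmetric] e_def[symmetric] by simp
qed

end
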